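(* Let $\mathcal{X}$ be a finite-dimensional complex Hilbert space and let $\mathcal{Y}$ be an isometric copy of $\mathcal{X}$. For $\mathcal{P},\mathcal{Q}\in\mathcal{D}(\mathcal{X})$ define $$\mathrm{qW}(\mathcal{P},\mathcal{Q}) := \min_{\pi} \operatorname{Tr}(\pi C)\quad\text{s.t. } \operatorname{Tr}_{\mathcal{Y}}(\pi)=\mathcal{P},\ \operatorname{Tr}_{\mathcal{X}}(\pi)=\mathcal{Q},\ \pi\in\mathcal{D}(\mathcal{X}\otimes\mathcal{Y}),$$ where $C=\frac{1}{2}(\mathrm{I}_{\mathcal{X}\otimes\mathcal{Y}}-\mathrm{SWAP})$. Then $\mathrm{qW}(\cdot,\cdot)$ is a semimetric on $\mathcal{D}(\mathcal{X})$, i.e., for all $\mathcal{P},\mathcal{Q}\in\mathcal{D}(\mathcal{X})$: (1) $\mathrm{qW}(\mathcal{P},\mathcal{Q})\ge 0$; (2) $\mathrm{qW}(\mathcal{P},\mathcal{Q})=\mathrm{qW}(\mathcal{Q},\mathcal{P})$; (3) $\mathrm{qW}(\mathcal{P},\mathcal{Q})=0$ if and only if $\mathcal{P}=\mathcal{Q}$.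
   Context: $\mathcal{D}(\mathcal{Z})$ denotes the set of density operators on a finite-dimensional complex Hilbert space $\mathcal{Z}$, i.e. positive semidefinite operators of trace one. $\operatorname{Tr}_{\mathcal{Y}}$ and $\operatorname{Tr}_{\mathcal{X}}$ denote the partial traces over $\mathcal{Y}$ and $\mathcal{X}$ respectively. Identifying $\mathcal{Y}$ with $\mathcal{X}$, $\mathrm{SWAP}$ is the linear operator on $\mathcal{X}\otimes\mathcal{Y}$ with $\mathrm{SWAP}(x\otimes y)=y\otimes x$ for all $x\in\mathcal{X},y\in\mathcal{Y}$, and $\mathrm{I}_{\mathcal{X}\otimes\mathcal{Y}}$ is the identity. *)

theory Defs
  imports "HOL-Analysis.Analysis"
begin

text \<open>Operators on a finite-dimensional complex Hilbert space with orthonormal basis indexed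
  by the finite type 'a are matrices of type complex^'a^'a.  The space X has basis indexed by 'n;
  Y is an isometric copy of X (same index type); X \<otimes> Y has product basis e_i \<otimes> e_j
  indexed by pairs (i,j) :: 'n \<times> 'n.\<close>

definition mtrace :: "complex^'a^'a \<Rightarrow> complex" where
  "mtrace A = (\<Sum>i\<in>UNIV. A $ i $ i)"

definition psd :: "complex^'a^'a \<Rightarrow> bool" where
  "psd A \<longleftrightarrow> (\<forall>v::complex^'a.
      (\<Sum>i\<in>UNIV. \<Sum>j\<in>UNIV. cnj (v $ i) * A $ i $ j * v $ j) \<in> \<real> \<and>
      0 \<le> Re (\<Sum>i\<in>UNIV. \<Sum>j\<in>UNIV. cnj (v $ i) * A $ i $ j * v $ j))"

definition density :: "complex^'a^'a \<Rightarrow> bool" where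
  "density A \<longleftrightarrow> psd A \<and> mtrace A = 1"

definition ptrace_Y :: "complex^('n::finite\<times>'n)^('n\<times>'n) \<Rightarrow> complex^'n^'n" where
  "ptrace_Y M = (\<chi> i k. \<Sum>j\<in>UNIV. M $ (i,j) $ (k,j))"

definition ptrace_X :: "complex^('n::finite\<times>'n)^('n\<times>'n) \<Rightarrow> complex^'n^'n" where
  "ptrace_X M = (\<chi> j l. \<Sum>i\<in>UNIV. M $ (i,j) $ (i,l))"

text \<open>SWAP (x \<otimes> y) = y \<otimes> x, i.e. SWAP (e_k \<otimes> e_l) = e_l \<otimes> e_k.\<close>
definition SWAP :: "complex^('n::finite\<times>'n)^('n\<times>'n)" where
  "SWAP = (\<chi> a b. if fst a = snd b \<and> snd a = fst b then 1 else 0)"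

definition cost :: "complex^('n::finite\<times>'n)^('n\<times>'n)" where
  "cost = (\<chi> a b. (1/2) * ((mat 1 :: complex^('n\<times>'n)^('n\<times>'n)) $ a $ b - SWAP $ a $ b))"

text \<open>Quantum Wasserstein semidistance: the minimum (infimum; attained by compactness)
  of Tr(\<pi> C) over couplings \<pi>.  Tr(\<pi> C) is real for density \<pi>, so we take its real part.\<close>
definition qW :: "complex^'n::finite^'n \<Rightarrow> complex^'n^'n \<Rightarrow> real" where
  "qW P Q = Inf {Re (mtrace (\<pi> ** cost)) | \<pi>.
      density \<pi> \<and> ptrace_Y \<pi> = P \<and> ptrace_X \<pi> = Q}"

end

theory Submission
  imports Defs
begin

text \<open>The cost C = (I - SWAP)/2 is the projector onto the antisymmetric subspace; explicitly,
  C is the sum of \<alpha> \<alpha>* over the vectors \<alpha>(i,j) = (e(i,j) - e(j,i))/2 for all pairs (i,j).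
  Hence Tr(\<pi> C) \<ge> 0 for positive \<pi>, and conjugating a coupling by SWAP exchanges its marginals
  at the same cost.  Writing P as a sum of rank-one terms w w*, the coupling that sums
  (w \<otimes> w)(w \<otimes> w)* / \<parallel>w\<parallel>^2 has both marginals P and lives on the symmetric subspace,
  so qW(P,P) = 0.  Conversely, with \<sigma>(i,j) = (e(i,j) + e(j,i))/2, every entry of
  Tr_Y \<pi> - Tr_X \<pi> is a sum of n cross terms 2 \<sigma>* \<pi> \<alpha> + 2 \<alpha>* \<pi> \<sigma>, and Cauchy-Schwarz
  bounds each entry of P - Q by 4 n \<surd>Tr(\<pi> C) for every coupling \<pi>; so qW(P,Q) = 0 forces
  P = Q even though the infimum need not be attained.\<close>

definition sesq :: "complex^'a^'a \<Rightarrow> complex^'a \<Rightarrow> complex^'a \<Rightarrow> complex" where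
  "sesq A x y = (\<Sum>i\<in>UNIV. \<Sum>j\<in>UNIV. cnj (x $ i) * A $ i $ j * y $ j)"

lemma psd_iff_sesq: "psd A \<longleftrightarrow> (\<forall>v. sesq A v v \<in> \<real> \<and> 0 \<le> Re (sesq A v v))"
  unfolding psd_def sesq_def by simp

lemma
  shows sesq_add_left: "sesq A (x + y) z = sesq A x z + sesq A y z"
    and sesq_add_right: "sesq A x (y + z) = sesq A x y + sesq A x z"
    and sesq_diff_left: "sesq A (x - y) z = sesq A x z - sesq A y z"
    and sesq_diff_right: "sesq A x (y - z) = sesq A x y - sesq A x z"
    and sesq_scale_left: "sesq A (c *s x) y = cnj c * sesq A x y"
    and sesq_scale_right: "sesq A x (c *s y) = c * sesq A x y"
    and sesq_minus_left: "sesq A (- x) y = - sesq A x y"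
    and sesq_minus_right: "sesq A x (- y) = - sesq A x y"
  unfolding sesq_def
  by (simp_all add: sum.distrib[symmetric] sum_subtractf[symmetric] sum_negf[symmetric]
      sum_distrib_left algebra_simps)

lemma sesq_axis_right: "sesq A v (axis j 1) = (\<Sum>i\<in>UNIV. cnj (v $ i) * A $ i $ j)"
  unfolding sesq_def axis_def by (rule sum.cong) (auto simp: if_distrib cong: if_cong)

lemma sesq_axis: "sesq A (axis i 1) (axis j 1) = A $ i $ j"
  unfolding sesq_axis_right by (simp add: axis_def if_distrib if_distribR cong: if_cong)

lemmas sesq_simps = sesq_add_left sesq_add_right sesq_diff_left sesq_diff_right
  sesq_scale_left sesq_scale_right sesq_axis

lemma
  shows sesq_add_matrix: "sesq (A + B) x y = sesq A x y + sesq B x y"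
    and sesq_diff_matrix: "sesq (A - B) x y = sesq A x y - sesq B x y"
    and sesq_zero_matrix: "sesq 0 x y = 0"
  unfolding sesq_def
  by (simp_all add: sum.distrib[symmetric] sum_subtractf[symmetric] algebra_simps)

lemma sesq_scaleR_matrix: "sesq (r *\<^sub>R A) x y = of_real r * sesq A x y"
  unfolding sesq_def vector_scaleR_component
  by (simp add: scaleR_conv_of_real sum_distrib_left algebra_simps)

lemma sesq_sum_matrix: "sesq (\<Sum>r\<in>S. B r) x y = (\<Sum>r\<in>S. sesq (B r) x y)"
  by (induction S rule: infinite_finite_induct) (simp_all add: sesq_zero_matrix sesq_add_matrix)

lemma psd_sesq_real: "psd A \<Longrightarrow> sesq A v v = of_real (Re (sesq A v v))"
  unfolding psd_iff_sesq by (metis Reals_cases Re_complex_of_real)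

lemma psd_sesq_nonneg: "psd A \<Longrightarrow> 0 \<le> Re (sesq A v v)"
  unfolding psd_iff_sesq by blast

lemma psd_diag_real: "psd A \<Longrightarrow> A $ i $ i = of_real (Re (A $ i $ i))"
  using psd_sesq_real[of A "axis i 1"] by (simp add: sesq_axis)

lemma psd_diag_nonneg: "psd A \<Longrightarrow> 0 \<le> Re (A $ i $ i)"
  using psd_sesq_nonneg[of A "axis i 1"] by (simp add: sesq_axis)

text \<open>Polarization: realness of the form on \<open>e\<^sub>i + e\<^sub>j\<close> and on \<open>e\<^sub>i + \<i> e\<^sub>j\<close>.\<close>
lemma psd_hermitian:
  assumes "psd A" shows "cnj (A $ i $ j) = A $ j $ i"
proof -
  have real_sum: "sesq A (axis i 1 + axis j 1) (axis i 1 + axis j 1) \<in> \<real>"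
    and real_twist: "sesq A (axis i 1 + \<i> *s axis j 1) (axis i 1 + \<i> *s axis j 1) \<in> \<real>"
    using assms unfolding psd_iff_sesq by blast+
  have "Im (A $ i $ i) = 0" "Im (A $ j $ j) = 0"
    using psd_diag_real[OF assms] by (metis Im_complex_of_real)+
  moreover from real_sum have "Im (A$i$i + A$i$j + A$j$i + A$j$j) = 0"
    by (simp add: sesq_simps complex_is_Real_iff algebra_simps)
  moreover from real_twist have "Im (A$i$i + \<i> * A$i$j - \<i> * A$j$i + A$j$j) = 0"
    by (simp add: sesq_simps complex_is_Real_iff algebra_simps)
  ultimately show ?thesis by (simp add: complex_eq_iff)
qed

lemma psd_sesq_commute: assumes "psd A" shows "sesq A y x = cnj (sesq A x y)"
proof -
  have "sesq A y x = (\<Sum>i\<in>UNIV. \<Sum>j\<in>UNIV. cnj (cnj (x $ j) * A $ j $ i * y $ i))"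
    unfolding sesq_def by (intro sum.cong refl) (simp add: psd_hermitian[OF assms] mult_ac)
  also have "\<dots> = cnj (sesq A x y)"
    unfolding sesq_def cnj_sum by (rule sum.swap)
  finally show ?thesis .
qed

lemma quadratic_nonneg_imp_le:
  fixes a c q :: real
  assumes nonneg: "\<And>t. 0 \<le> a - 2*t*c + t\<^sup>2*c*q" and "0 \<le> q" "0 \<le> c"
  shows "c \<le> a * q"
proof (cases "q = 0")
  case True
  have "c = 0"
  proof (rule ccontr)
    assume "c \<noteq> 0"
    have "0 \<le> a - 2 * ((a + 1) / (2 * c)) * c" using nonneg[of "(a + 1) / (2 * c)"] True by simp
    also have "\<dots> = -1" using \<open>c \<noteq> 0\<close> by (simp add: field_simps)
    finally show False by simp
  qed
  with nonneg[of 0] True show ?thesis by simp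
next
  case False
  then have "q > 0" using \<open>0 \<le> q\<close> by simp
  have "0 \<le> a - 2 * (1/q) * c + (1/q)\<^sup>2 * c * q" by (rule nonneg)
  also have "\<dots> = (a * q - c) / q" using \<open>q > 0\<close> by (simp add: field_simps power2_eq_square)
  finally show ?thesis using \<open>q > 0\<close> by (simp add: zero_le_divide_iff)
qed

lemma psd_cauchy_schwarz:
  assumes "psd A"
  shows "(cmod (sesq A x y))\<^sup>2 \<le> Re (sesq A x x) * Re (sesq A y y)"
proof (rule quadratic_nonneg_imp_le)
  fix t :: real
  define b where "b = sesq A x y"
  define z where "z = - (of_real t * cnj b)"
  have "0 \<le> Re (sesq A (x + z *s y) (x + z *s y))"
    by (rule psd_sesq_nonneg[OF assms])
  also have "sesq A (x + z *s y) (x + z *s y)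
      = sesq A x x + z * b + cnj z * cnj b + cnj z * z * sesq A y y"
    unfolding b_def by (simp add: sesq_simps psd_sesq_commute[OF assms, of y x] algebra_simps)
  also have "Re \<dots> = Re (sesq A x x) - 2*t*(cmod b)\<^sup>2 + t\<^sup>2 * (cmod b)\<^sup>2 * Re (sesq A y y)"
    using psd_sesq_real[OF assms, of y] cmod_power2[of b]
    by (simp add: z_def algebra_simps power2_eq_square)
  finally show "0 \<le> Re (sesq A x x) - 2*t*(cmod (sesq A x y))\<^sup>2
      + t\<^sup>2 * (cmod (sesq A x y))\<^sup>2 * Re (sesq A y y)" unfolding b_def .
qed (use psd_sesq_nonneg[OF assms] in auto)

lemma psd_cauchy_schwarz_sqrt:
  "psd A \<Longrightarrow> cmod (sesq A x y) \<le> sqrt (Re (sesq A x x) * Re (sesq A y y))"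
  using psd_cauchy_schwarz real_le_rsqrt by blast

lemma psd_diag_zero_imp_zero: "psd A \<Longrightarrow> A $ i $ i = 0 \<Longrightarrow> A $ i $ j = 0"
  using psd_cauchy_schwarz[of A "axis i 1" "axis j 1"] by (simp add: sesq_axis)

definition outer :: "complex^'a \<Rightarrow> complex^'a^'a" where
  "outer w = (\<chi> i j. w $ i * cnj (w $ j))"

lemma outer_zero [simp]: "outer 0 = 0"
  unfolding outer_def by (simp add: vec_eq_iff)

lemma sesq_outer: "sesq (outer u) v v = of_real ((cmod (\<Sum>k\<in>UNIV. cnj (v $ k) * u $ k))\<^sup>2)"
proof -
  define s where "s = (\<Sum>k\<in>UNIV. cnj (v $ k) * u $ k)"
  have "sesq (outer u) v v = s * cnj s"
    unfolding sesq_def outer_def s_def cnj_sum sum_product by (simp add: algebra_simps)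
  also have "\<dots> = of_real ((cmod s)\<^sup>2)"
    by (rule complex_norm_square[symmetric])
  finally show ?thesis unfolding s_def .
qed

lemma psd_outer: "psd (outer u)"
  unfolding psd_iff_sesq sesq_outer by simp

lemma psd_add: "psd A \<Longrightarrow> psd B \<Longrightarrow> psd (A + B)"
  unfolding psd_iff_sesq sesq_add_matrix by auto

lemma psd_sum: "(\<And>r. r \<in> S \<Longrightarrow> psd (B r)) \<Longrightarrow> psd (\<Sum>r\<in>S. B r)"
proof (induction S rule: infinite_finite_induct)
  case (insert r S)
  then show ?case by (simp add: psd_add)
qed (simp_all add: psd_iff_sesq sesq_zero_matrix)

lemma psd_scaleR: "psd A \<Longrightarrow> 0 \<le> r \<Longrightarrow> psd (r *\<^sub>R A)"
  unfolding psd_iff_sesq sesq_scaleR_matrix by simp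

text \<open>Subtracting \<open>pivot_part A i\<close> is one step of Cholesky elimination.  If \<open>A $ i $ i = 0\<close>,
  division by zero makes it \<open>0\<close>, which for positive semidefinite \<open>A\<close> is also the right value
  (row \<open>i\<close> vanishes), so no case split is needed.\<close>
definition pivot_part :: "complex^'a^'a \<Rightarrow> 'a \<Rightarrow> complex^'a^'a" where
  "pivot_part A i = (\<chi> k l. A $ k $ i * A $ i $ l / A $ i $ i)"

lemma pivot_part_eq_outer:
  assumes "psd A"
  shows "pivot_part A i = outer (\<chi> k. A $ k $ i / of_real (sqrt (Re (A $ i $ i))))"
proof -
  define c where "c = complex_of_real (sqrt (Re (A $ i $ i)))"
  have "c * c = A $ i $ i"
    unfolding c_def of_real_mult[symmetric]
    using psd_diag_nonneg[OF assms, of i] psd_diag_real[OF assms, of i] by simp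
  moreover have "cnj c = c" unfolding c_def by simp
  ultimately show ?thesis
    unfolding pivot_part_def outer_def c_def[symmetric]
    by (simp add: vec_eq_iff psd_hermitian[OF assms])
qed

lemma psd_minus_pivot_part:
  assumes "psd A" shows "psd (A - pivot_part A i)"
  unfolding psd_iff_sesq
proof
  fix v
  define d where "d = Re (A $ i $ i)"
  define s where "s = sesq A v (axis i 1)"
  have "sesq (pivot_part A i) v v = of_real ((cmod (s / of_real (sqrt d)))\<^sup>2)"
    unfolding pivot_part_eq_outer[OF assms] sesq_outer s_def sesq_axis_right d_def
    by (simp add: sum_divide_distrib)
  also have "\<dots> = of_real ((cmod s)\<^sup>2 / d)"
    using psd_diag_nonneg[OF assms, of i] by (simp add: d_def norm_divide power_divide)
  finally have "sesq (A - pivot_part A i) v v = of_real (Re (sesq A v v) - (cmod s)\<^sup>2 / d)"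
    using psd_sesq_real[OF assms, of v] by (simp add: sesq_diff_matrix)
  moreover have "(cmod s)\<^sup>2 / d \<le> Re (sesq A v v)"
  proof -
    have "(cmod s)\<^sup>2 \<le> Re (sesq A v v) * d"
      using psd_cauchy_schwarz[OF assms, of v "axis i 1"] by (simp add: s_def d_def sesq_axis)
    then show ?thesis
      using psd_sesq_nonneg[OF assms, of v] psd_diag_nonneg[OF assms, of i]
      by (cases "d = 0") (simp_all add: d_def divide_le_eq)
  qed
  ultimately show "sesq (A - pivot_part A i) v v \<in> \<real> \<and> 0 \<le> Re (sesq (A - pivot_part A i) v v)"
    by simp
qed

lemma diag_minus_pivot_part:
  assumes "psd A" and "k = i \<or> A $ k $ k = 0"
  shows "(A - pivot_part A i) $ k $ k = 0"
  using assms psd_diag_zero_imp_zero[OF assms(1), of k i] unfolding pivot_part_def by auto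

lemma psd_eq_sum_outer_on:
  assumes "finite S" and "psd A" and "\<And>i. i \<notin> S \<Longrightarrow> A $ i $ i = 0"
  shows "\<exists>w. A = (\<Sum>r\<in>S. outer (w r))"
  using assms
proof (induction S arbitrary: A rule: finite_induct)
  case empty
  then have "A = 0"
    using psd_diag_zero_imp_zero[OF empty.prems(1)] by (simp add: vec_eq_iff)
  then show ?case by simp
next
  case (insert i S)
  define u where "u = (\<chi> k. A $ k $ i / of_real (sqrt (Re (A $ i $ i))))"
  have "psd (A - pivot_part A i)"
    using insert.prems(1) by (rule psd_minus_pivot_part)
  moreover have "(A - pivot_part A i) $ k $ k = 0" if "k \<notin> S" for k
    using insert.prems that by (intro diag_minus_pivot_part) auto
  ultimately obtain w where w: "A - pivot_part A i = (\<Sum>r\<in>S. outer (w r))"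
    using insert.IH by blast
  have "A = outer u + (\<Sum>r\<in>S. outer (w r))"
    unfolding w[symmetric] u_def pivot_part_eq_outer[OF insert.prems(1), symmetric] by simp
  also have "\<dots> = (\<Sum>r\<in>insert i S. outer ((w(i := u)) r))"
    using insert.hyps by (simp, intro sum.cong) auto
  finally show ?case by blast
qed

lemma psd_eq_sum_outer:
  fixes A :: "complex^'n::finite^'n"
  assumes "psd A" shows "\<exists>w::'n \<Rightarrow> complex^'n. A = (\<Sum>r\<in>UNIV. outer (w r))"
  using psd_eq_sum_outer_on[of UNIV A] assms by simp

definition anti_vec :: "'n::finite \<times> 'n \<Rightarrow> complex^('n \<times> 'n)" where
  "anti_vec a = (1/2) *s (axis a 1 - axis (prod.swap a) 1)"

definition sym_vec :: "'n::finite \<times> 'n \<Rightarrow> complex^('n \<times> 'n)" where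
  "sym_vec a = (1/2) *s (axis a 1 + axis (prod.swap a) 1)"

lemma swap_eq_iff: "prod.swap x = y \<longleftrightarrow> x = prod.swap y"
  by auto

lemma anti_vec_component:
  "anti_vec a $ b = (of_bool (b = a) - of_bool (prod.swap b = a)) / 2"
proof -
  have "(b = prod.swap a) = (prod.swap b = a)" by auto
  then show ?thesis unfolding anti_vec_def axis_def of_bool_def by simp
qed

lemma cnj_anti_vec_component: "cnj (anti_vec a $ b) = anti_vec a $ b"
  unfolding anti_vec_component by (simp add: of_bool_def)

lemma cost_eq_sum_outer: "(cost :: complex^('n::finite \<times> 'n)^('n \<times> 'n)) = (\<Sum>a\<in>UNIV. outer (anti_vec a))"
proof -
  have "(\<Sum>a\<in>UNIV. outer (anti_vec a)) $ b $ c = cost $ b $ c" for b c :: "'n \<times> 'n"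
  proof -
    define X Y Z W where "X a = (of_bool (b = a) :: complex)" and "Y a = (of_bool (prod.swap b = a) :: complex)"
      and "Z a = (of_bool (c = a) :: complex)" and "W a = (of_bool (prod.swap c = a) :: complex)" for a
    have "(\<Sum>a\<in>UNIV. outer (anti_vec a)) $ b $ c = (\<Sum>a\<in>UNIV. (X a - Y a) / 2 * ((Z a - W a) / 2))"
      unfolding outer_def sum_component cnj_anti_vec_component
      by (simp add: anti_vec_component X_def Y_def Z_def W_def)
    also have "\<dots> = (\<Sum>a\<in>UNIV. (1/4) * (X a * Z a - X a * W a - Y a * Z a + Y a * W a))"
      by (intro sum.cong) (simp_all add: field_simps)
    also have "\<dots> = (1/4) * ((\<Sum>a\<in>UNIV. X a * Z a) - (\<Sum>a\<in>UNIV. X a * W a)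
        - (\<Sum>a\<in>UNIV. Y a * Z a) + (\<Sum>a\<in>UNIV. Y a * W a))"
      by (simp only: sum_distrib_left[symmetric] sum.distrib sum_subtractf)
    also have "\<dots> = (1/4) * (of_bool (b = c) - of_bool (b = prod.swap c)
        - of_bool (prod.swap b = c) + of_bool (prod.swap b = prod.swap c))"
      unfolding X_def Y_def Z_def W_def by simp
    also have "\<dots> = (1/2) * (of_bool (b = c) - of_bool (b = prod.swap c))"
      by (simp add: swap_eq_iff field_simps)
    also have "\<dots> = cost $ b $ c"
      unfolding cost_def SWAP_def mat_def by (simp add: prod_eq_iff of_bool_def)
    finally show ?thesis .
  qed
  then show ?thesis by (simp add: vec_eq_iff)
qed

lemma mtrace_mult_outer: "mtrace (A ** outer w) = sesq A w w"
  unfolding mtrace_def matrix_matrix_mult_def outer_def sesq_def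
  by (simp add: sum_distrib_left mult_ac)

lemma mtrace_mult_sum:
  fixes A :: "complex^'a::finite^'a"
  shows "mtrace (A ** (\<Sum>r\<in>S. B r)) = (\<Sum>r\<in>S. mtrace (A ** B r))"
  unfolding mtrace_def matrix_matrix_mult_def
  by (simp add: sum_component sum_distrib_left sum.swap[of _ S])

lemma mtrace_mult_cost:
  "mtrace (\<pi> ** cost) = (\<Sum>a\<in>UNIV. sesq \<pi> (anti_vec a) (anti_vec a))"
  unfolding cost_eq_sum_outer mtrace_mult_sum mtrace_mult_outer ..

definition transport_cost :: "complex^('n::finite \<times> 'n)^('n \<times> 'n) \<Rightarrow> real" where
  "transport_cost \<pi> = Re (mtrace (\<pi> ** cost))"

lemma transport_cost_eq: "transport_cost \<pi> = (\<Sum>a\<in>UNIV. Re (sesq \<pi> (anti_vec a) (anti_vec a)))"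
  unfolding transport_cost_def mtrace_mult_cost Re_sum ..

lemma transport_cost_nonneg: "psd \<pi> \<Longrightarrow> 0 \<le> transport_cost \<pi>"
  unfolding transport_cost_eq by (intro sum_nonneg psd_sesq_nonneg)

lemma sesq_anti_vec_le_transport_cost:
  "psd \<pi> \<Longrightarrow> Re (sesq \<pi> (anti_vec a) (anti_vec a)) \<le> transport_cost \<pi>"
  unfolding transport_cost_eq by (intro member_le_sum psd_sesq_nonneg) auto

definition couplings ::
    "complex^'n::finite^'n \<Rightarrow> complex^'n^'n \<Rightarrow> (complex^('n \<times> 'n)^('n \<times> 'n)) set" where
  "couplings P Q = {\<pi>. density \<pi> \<and> ptrace_Y \<pi> = P \<and> ptrace_X \<pi> = Q}"

lemma qW_eq_INF: "qW P Q = (INF \<pi>\<in>couplings P Q. transport_cost \<pi>)"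
  unfolding qW_def couplings_def transport_cost_def by (rule arg_cong[where f = Inf]) auto

lemma bdd_below_transport_cost: "bdd_below (transport_cost ` couplings P Q)"
  by (rule bdd_belowI2[of _ 0]) (simp add: couplings_def density_def transport_cost_nonneg)

lemma mtrace_ptrace_Y: "mtrace (ptrace_Y \<pi>) = mtrace \<pi>"
  unfolding mtrace_def ptrace_Y_def
  by (simp add: sum.cartesian_product UNIV_Times_UNIV[symmetric] del: UNIV_Times_UNIV)

lemma sum_swap_pairs: "(\<Sum>a\<in>UNIV. f (prod.swap a)) = (\<Sum>a\<in>UNIV. f a)"
  by (rule sum.reindex_bij_witness[of _ prod.swap prod.swap]) auto

definition swap_vec :: "complex^('a::finite \<times> 'b::finite) \<Rightarrow> complex^('b \<times> 'a)" where
  "swap_vec v = (\<chi> a. v $ prod.swap a)"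

definition swap_mat ::
    "complex^('a::finite \<times> 'b::finite)^('a \<times> 'b) \<Rightarrow> complex^('b \<times> 'a)^('b \<times> 'a)" where
  "swap_mat \<pi> = (\<chi> a b. \<pi> $ prod.swap a $ prod.swap b)"

lemma swap_mat_swap_mat [simp]: "swap_mat (swap_mat \<pi>) = \<pi>"
  unfolding swap_mat_def by (simp add: vec_eq_iff)

lemma sesq_swap_mat: "sesq (swap_mat \<pi>) x y = sesq \<pi> (swap_vec x) (swap_vec y)"
proof -
  have "sesq \<pi> (swap_vec x) (swap_vec y)
      = (\<Sum>a\<in>UNIV. \<Sum>b\<in>UNIV. cnj (x $ a) * \<pi> $ prod.swap a $ b * y $ prod.swap b)"
    unfolding sesq_def swap_vec_def
    using sum_swap_pairs[of "\<lambda>a. \<Sum>b\<in>UNIV. cnj (x $ a) * \<pi> $ prod.swap a $ b * y $ prod.swap b"]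
    by simp
  also have "\<dots> = sesq (swap_mat \<pi>) x y"
    unfolding sesq_def swap_mat_def
    by (intro sum.cong refl) (use sum_swap_pairs[of "\<lambda>b. cnj (x $ _) * \<pi> $ _ $ b * y $ prod.swap b"] in simp)
  finally show ?thesis ..
qed

lemma swap_vec_anti_vec: "swap_vec (anti_vec a) = - anti_vec a"
  unfolding swap_vec_def by (simp add: vec_eq_iff anti_vec_component swap_eq_iff field_simps)

lemma transport_cost_swap_mat: "transport_cost (swap_mat \<pi>) = transport_cost \<pi>"
  unfolding transport_cost_eq sesq_swap_mat swap_vec_anti_vec
  by (simp add: sesq_minus_left sesq_minus_right)

lemma swap_mat_mem_couplings:
  assumes "\<pi> \<in> couplings P Q" shows "swap_mat \<pi> \<in> couplings Q P"
proof -
  have "psd (swap_mat \<pi>)"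
    using assms unfolding couplings_def density_def psd_iff_sesq sesq_swap_mat by blast
  moreover have "ptrace_Y (swap_mat \<pi>) = ptrace_X \<pi>" "ptrace_X (swap_mat \<pi>) = ptrace_Y \<pi>"
    unfolding ptrace_Y_def ptrace_X_def swap_mat_def by simp_all
  moreover have "mtrace (swap_mat \<pi>) = mtrace \<pi>"
    unfolding mtrace_def swap_mat_def using sum_swap_pairs[of "\<lambda>a. \<pi> $ a $ a"] by simp
  ultimately show ?thesis
    using assms unfolding couplings_def density_def by simp
qed

lemma couplings_commute: "couplings Q P = swap_mat ` couplings P Q"
  using swap_mat_mem_couplings by (metis swap_mat_swap_mat image_eqI subsetI subset_antisym image_subsetI)

lemma qW_commute: "qW P Q = qW Q P"
  unfolding qW_eq_INF couplings_commute[of P Q] image_image transport_cost_swap_mat ..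

definition tensor_vec :: "complex^'a \<Rightarrow> complex^'b \<Rightarrow> complex^('a \<times> 'b)" where
  "tensor_vec x y = (\<chi> a. x $ fst a * y $ snd a)"

definition tensor_mat :: "complex^'a^'a \<Rightarrow> complex^'b^'b \<Rightarrow> complex^('a \<times> 'b)^('a \<times> 'b)" where
  "tensor_mat P Q = (\<chi> a b. P $ fst a $ fst b * Q $ snd a $ snd b)"

lemma tensor_mat_sum_outer:
  "tensor_mat (\<Sum>r\<in>R. outer (w r)) (\<Sum>s\<in>S. outer (u s))
    = (\<Sum>r\<in>R. \<Sum>s\<in>S. outer (tensor_vec (w r) (u s)))"
  unfolding tensor_mat_def outer_def tensor_vec_def
  by (simp add: vec_eq_iff sum_component sum_product mult_ac)

lemma psd_tensor_mat:
  fixes P :: "complex^'a::finite^'a" and Q :: "complex^'b::finite^'b"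
  assumes "psd P" and "psd Q" shows "psd (tensor_mat P Q)"
proof -
  obtain w :: "'a \<Rightarrow> complex^'a" where "P = (\<Sum>r\<in>UNIV. outer (w r))"
    using psd_eq_sum_outer[OF assms(1)] by blast
  moreover obtain u :: "'b \<Rightarrow> complex^'b" where "Q = (\<Sum>s\<in>UNIV. outer (u s))"
    using psd_eq_sum_outer[OF assms(2)] by blast
  ultimately show ?thesis
    by (simp add: tensor_mat_sum_outer psd_sum psd_outer)
qed

lemma ptrace_tensor_mat:
  shows "ptrace_Y (tensor_mat P Q) = (\<chi> i k. mtrace Q * P $ i $ k)"
    and "ptrace_X (tensor_mat P Q) = (\<chi> i k. mtrace P * Q $ i $ k)"
  unfolding ptrace_Y_def ptrace_X_def tensor_mat_def mtrace_def
  by (simp_all add: sum_distrib_left sum_distrib_right mult_ac)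

lemma tensor_mat_mem_couplings:
  assumes "density P" and "density Q" shows "tensor_mat P Q \<in> couplings P Q"
proof -
  have marginals: "ptrace_Y (tensor_mat P Q) = P" "ptrace_X (tensor_mat P Q) = Q"
    using assms unfolding ptrace_tensor_mat density_def by (simp_all add: vec_eq_iff)
  then have "mtrace (tensor_mat P Q) = 1"
    using assms mtrace_ptrace_Y[of "tensor_mat P Q"] unfolding density_def by simp
  with marginals show ?thesis
    using assms psd_tensor_mat unfolding couplings_def density_def by blast
qed

lemma qW_nonneg:
  assumes "density P" and "density Q" shows "0 \<le> qW P Q"
  unfolding qW_eq_INF using tensor_mat_mem_couplings[OF assms]
  by (intro cINF_greatest) (auto simp: couplings_def density_def transport_cost_nonneg)

lemma linear_ptrace: "linear ptrace_Y" "linear ptrace_X"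
  by (auto intro!: linearI simp: ptrace_Y_def ptrace_X_def vec_eq_iff sum.distrib scaleR_sum_right)

lemma sum_mult_cnj_eq_norm: "(\<Sum>i\<in>UNIV. x $ i * cnj (x $ i)) = of_real ((norm x)\<^sup>2)"
  unfolding norm_vec_def L2_set_def
  by (simp add: sum_nonneg of_real_sum complex_norm_square del: of_real_power)

lemma ptrace_outer_tensor_vec:
  shows "ptrace_Y (outer (tensor_vec x y)) = (norm y)\<^sup>2 *\<^sub>R outer x"
    and "ptrace_X (outer (tensor_vec x y)) = (norm x)\<^sup>2 *\<^sub>R outer y"
proof -
  have "(\<Sum>j\<in>UNIV. x $ i * y $ j * cnj (x $ k * y $ j))
      = x $ i * cnj (x $ k) * (\<Sum>j\<in>UNIV. y $ j * cnj (y $ j))"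
    and "(\<Sum>j\<in>UNIV. x $ j * y $ i * cnj (x $ j * y $ k))
      = y $ i * cnj (y $ k) * (\<Sum>j\<in>UNIV. x $ j * cnj (x $ j))"
    for i k by (simp_all add: sum_distrib_left mult_ac)
  then show "ptrace_Y (outer (tensor_vec x y)) = (norm y)\<^sup>2 *\<^sub>R outer x"
    and "ptrace_X (outer (tensor_vec x y)) = (norm x)\<^sup>2 *\<^sub>R outer y"
    unfolding ptrace_Y_def ptrace_X_def outer_def tensor_vec_def vec_eq_iff vector_scaleR_component
    by (simp_all add: sum_mult_cnj_eq_norm scaleR_conv_of_real[where 'a = complex] mult_ac del: of_real_power)
qed

text \<open>For \<open>w r = 0\<close> the weight is \<open>1 / 0 = 0\<close>, which is harmless since the term vanishes anyway.\<close>
definition sym_coupling :: "('r::finite \<Rightarrow> complex^'n::finite) \<Rightarrow> complex^('n \<times> 'n)^('n \<times> 'n)" where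
  "sym_coupling w = (\<Sum>r\<in>UNIV. (1 / (norm (w r))\<^sup>2) *\<^sub>R outer (tensor_vec (w r) (w r)))"

lemma ptrace_sym_coupling:
  shows "ptrace_Y (sym_coupling w) = (\<Sum>r\<in>UNIV. outer (w r))"
    and "ptrace_X (sym_coupling w) = (\<Sum>r\<in>UNIV. outer (w r))"
proof -
  have normalize: "(1 / (norm x)\<^sup>2) *\<^sub>R ((norm x)\<^sup>2 *\<^sub>R outer x) = outer x" for x :: "complex^'n"
    by (cases "x = 0") simp_all
  show "ptrace_Y (sym_coupling w) = (\<Sum>r\<in>UNIV. outer (w r))"
    unfolding sym_coupling_def linear_sum[OF linear_ptrace(1)] linear_scale[OF linear_ptrace(1)]
      ptrace_outer_tensor_vec normalize ..
  show "ptrace_X (sym_coupling w) = (\<Sum>r\<in>UNIV. outer (w r))"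
    unfolding sym_coupling_def linear_sum[OF linear_ptrace(2)] linear_scale[OF linear_ptrace(2)]
      ptrace_outer_tensor_vec normalize ..
qed

lemma psd_sym_coupling: "psd (sym_coupling w)"
  unfolding sym_coupling_def by (intro psd_sum psd_scaleR psd_outer) simp

lemma sum_cnj_anti_vec_mult: "(\<Sum>b\<in>UNIV. cnj (anti_vec a $ b) * t $ b) = (t $ a - t $ prod.swap a) / 2"
proof -
  have "(\<Sum>b\<in>UNIV. cnj (anti_vec a $ b) * t $ b)
      = ((\<Sum>b\<in>UNIV. of_bool (b = a) * t $ b) - (\<Sum>b\<in>UNIV. of_bool (b = prod.swap a) * t $ b)) / 2"
    unfolding cnj_anti_vec_component unfolding anti_vec_component swap_eq_iff
    by (simp add: sum_subtractf sum_divide_distrib[symmetric] left_diff_distrib)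
  then show ?thesis by simp
qed

lemma sesq_outer_tensor_vec_anti_vec: "sesq (outer (tensor_vec x x)) (anti_vec a) (anti_vec a) = 0"
  unfolding sesq_outer sum_cnj_anti_vec_mult by (simp add: tensor_vec_def)

lemma transport_cost_sym_coupling: "transport_cost (sym_coupling w) = 0"
  unfolding transport_cost_eq sym_coupling_def
  by (simp add: sesq_sum_matrix sesq_scaleR_matrix sesq_outer_tensor_vec_anti_vec)

lemma qW_self:
  fixes P :: "complex^'n::finite^'n"
  assumes "density P" shows "qW P P = 0"
proof -
  obtain w :: "'n \<Rightarrow> complex^'n" where w: "P = (\<Sum>r\<in>UNIV. outer (w r))"
    using psd_eq_sum_outer assms unfolding density_def by blast
  have marginals: "ptrace_Y (sym_coupling w) = P" "ptrace_X (sym_coupling w) = P"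
    using w by (simp_all add: ptrace_sym_coupling)
  moreover have "mtrace (sym_coupling w) = 1"
    using mtrace_ptrace_Y[of "sym_coupling w"] marginals assms unfolding density_def by simp
  ultimately have "sym_coupling w \<in> couplings P P"
    using psd_sym_coupling unfolding couplings_def density_def by simp
  then have "qW P P \<le> 0"
    unfolding qW_eq_INF using transport_cost_sym_coupling[of w]
    by (metis cINF_lower bdd_below_transport_cost)
  with qW_nonneg[OF assms assms] show ?thesis by simp
qed

lemma entry_diff_eq_cross_terms:
  "\<pi> $ a $ b - \<pi> $ prod.swap a $ prod.swap b
    = 2 * sesq \<pi> (sym_vec a) (anti_vec b) + 2 * sesq \<pi> (anti_vec a) (sym_vec b)"
  unfolding sym_vec_def anti_vec_def by (simp add: sesq_simps algebra_simps)

lemma density_diag_le_1: assumes "density A" shows "Re (A $ i $ i) \<le> 1"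
proof -
  have "Re (A $ i $ i) \<le> (\<Sum>j\<in>UNIV. Re (A $ j $ j))"
    using assms unfolding density_def by (intro member_le_sum psd_diag_nonneg) auto
  also have "\<dots> = 1"
    using assms unfolding density_def mtrace_def Re_sum[symmetric] by simp
  finally show ?thesis .
qed

lemma sesq_sym_vec_le_1:
  assumes "density \<pi>" shows "Re (sesq \<pi> (sym_vec a) (sym_vec a)) \<le> 1"
proof -
  have "Re (sesq \<pi> (sym_vec a) (sym_vec a)) + Re (sesq \<pi> (anti_vec a) (anti_vec a))
      = (Re (\<pi> $ a $ a) + Re (\<pi> $ prod.swap a $ prod.swap a)) / 2"
    unfolding sym_vec_def anti_vec_def by (simp add: sesq_simps algebra_simps)
  moreover have "0 \<le> Re (sesq \<pi> (anti_vec a) (anti_vec a))"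
    using assms unfolding density_def by (simp add: psd_sesq_nonneg)
  ultimately show ?thesis
    using density_diag_le_1[OF assms, of a] density_diag_le_1[OF assms, of "prod.swap a"] by argo
qed

lemma cross_term_le_sqrt_transport_cost:
  assumes "density \<pi>"
  shows "cmod (sesq \<pi> (sym_vec a) (anti_vec b)) \<le> sqrt (transport_cost \<pi>)"
proof -
  have psd: "psd \<pi>" using assms unfolding density_def by simp
  have "cmod (sesq \<pi> (sym_vec a) (anti_vec b))
      \<le> sqrt (Re (sesq \<pi> (sym_vec a) (sym_vec a)) * Re (sesq \<pi> (anti_vec b) (anti_vec b)))"
    by (rule psd_cauchy_schwarz_sqrt[OF psd])
  also have "\<dots> \<le> sqrt (1 * transport_cost \<pi>)"
    using sesq_sym_vec_le_1[OF assms] sesq_anti_vec_le_transport_cost[OF psd]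
      psd_sesq_nonneg[OF psd] transport_cost_nonneg[OF psd]
    by (intro real_sqrt_le_mono mult_mono) auto
  finally show ?thesis by simp
qed

lemma marginal_diff_le_transport_cost:
  fixes \<pi> :: "complex^('n::finite \<times> 'n)^('n \<times> 'n)"
  assumes "density \<pi>"
  shows "cmod (ptrace_Y \<pi> $ i $ k - ptrace_X \<pi> $ i $ k) \<le> 4 * CARD('n) * sqrt (transport_cost \<pi>)"
proof -
  have psd: "psd \<pi>" using assms unfolding density_def by simp
  have term_le: "cmod (\<pi> $ (i,j) $ (k,j) - \<pi> $ (j,i) $ (j,k)) \<le> 4 * sqrt (transport_cost \<pi>)" for j
  proof -
    define s1 s2 where "s1 = sesq \<pi> (sym_vec (i,j)) (anti_vec (k,j))"
      and "s2 = sesq \<pi> (sym_vec (k,j)) (anti_vec (i,j))"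
    have "\<pi> $ (i,j) $ (k,j) - \<pi> $ (j,i) $ (j,k) = 2 * s1 + 2 * cnj s2"
      using entry_diff_eq_cross_terms[of \<pi> "(i,j)" "(k,j)"]
      by (simp add: s1_def s2_def psd_sesq_commute[OF psd, of "anti_vec (i,j)"])
    then have "cmod (\<pi> $ (i,j) $ (k,j) - \<pi> $ (j,i) $ (j,k)) \<le> 2 * cmod s1 + 2 * cmod s2"
      using norm_triangle_ineq[of "2 * s1" "2 * cnj s2"] by (simp add: norm_mult)
    then show ?thesis
      using cross_term_le_sqrt_transport_cost[OF assms] unfolding s1_def s2_def by (smt (verit))
  qed
  have "ptrace_Y \<pi> $ i $ k - ptrace_X \<pi> $ i $ k = (\<Sum>j\<in>UNIV. \<pi> $ (i,j) $ (k,j) - \<pi> $ (j,i) $ (j,k))"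
    unfolding ptrace_Y_def ptrace_X_def by (simp add: sum_subtractf)
  also have "cmod \<dots> \<le> (\<Sum>j\<in>(UNIV::'n set). 4 * sqrt (transport_cost \<pi>))"
    using term_le by (intro order_trans[OF norm_sum] sum_mono)
  finally show ?thesis by simp
qed

lemma marginal_diff_le_qW:
  fixes P Q :: "complex^'n::finite^'n"
  assumes "density P" and "density Q"
  shows "cmod (P $ i $ k - Q $ i $ k) \<le> 4 * CARD('n) * sqrt (qW P Q)"
proof -
  define c where "c = cmod (P $ i $ k - Q $ i $ k) / (4 * CARD('n))"
  have "c\<^sup>2 \<le> transport_cost \<pi>" if "\<pi> \<in> couplings P Q" for \<pi>
  proof -
    have "c \<le> sqrt (transport_cost \<pi>)"
      using marginal_diff_le_transport_cost[of \<pi> i k] that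
      unfolding c_def couplings_def by (simp add: field_simps)
    moreover have "0 \<le> c" "0 \<le> transport_cost \<pi>"
      using that transport_cost_nonneg unfolding c_def couplings_def density_def by auto
    ultimately show ?thesis
      using power_mono[of c "sqrt (transport_cost \<pi>)" 2] by simp
  qed
  then have "c\<^sup>2 \<le> qW P Q"
    unfolding qW_eq_INF using tensor_mat_mem_couplings[OF assms] by (intro cINF_greatest) auto
  then have "c \<le> sqrt (qW P Q)"
    by (simp add: c_def real_le_rsqrt)
  then show ?thesis by (simp add: c_def field_simps)
qed

lemma eq_if_qW_eq_0:
  fixes P Q :: "complex^'n::finite^'n"
  assumes "density P" and "density Q" and "qW P Q = 0"
  shows "P = Q"
  using marginal_diff_le_qW[OF assms(1,2)] assms(3) by (simp add: vec_eq_iff)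

theorem theorem1:
  fixes P Q :: "complex^'n^'n"
  assumes "density P" and "density Q"
  shows "qW P Q \<ge> 0 \<and> qW P Q = qW Q P \<and> (qW P Q = 0 \<longleftrightarrow> P = Q)"
  using qW_nonneg[OF assms] qW_commute[of P Q] eq_if_qW_eq_0[OF assms] qW_self[OF assms(1)]
  by blast

end
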